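(* For $\ell\in\{0,\dots,N-1\}$ let $$\psi_\ell=\frac1{\sqrt{\|G_\ell\|_1}}\sum_{m\in\mathbb{Z}}G[mN+\ell]\,\phi_{mN+\ell}.$$ Then $\psi_\ell$ are eigenfunctions of $\mathcal{T}_K^N$ with $\mathcal{T}_K^N\psi_\ell=\|G_\ell\|_1\psi_\ell$; they satisfy $\|\psi_\ell\|_{\mathcal{H}}=1$ and $\|\psi_\ell\|=\frac{\|G_\ell\|}{\sqrt{\|G_\ell\|_1}}$; and they are orthogonal in $L^2_\mu$, i.e. $\langle\psi_\ell,\psi_k\rangle=0$ for $k\ne\ell$.
   Context: Let $\mathbb{T}=[-\pi,\pi)$, $j=\sqrt{-1}$, $\phi_k(x)=e^{jkx}$, $\mu$ uniform probability measure on $\mathbb{T}$, $\langle\cdot,\cdot\rangle$ and $\|\cdot\|$ the $L^2_\mu$ inner product and norm. Let $g$ be even, $M>0$, $K(x,x')=g(M((x-x')\bmod\mathbb{T}))$ positive definite with RKHS $\mathcal{H}$ (where $\theta\bmod\mathbb{T}:=((\theta+\pi)\bmod2\pi)-\pi$), $G[k]=\frac1{2\pi}\int_{-\pi}^{\pi}g(M\theta)e^{-jk\theta}d\theta\ge0$, $\sum_kG[k]<\infty$; the RKHS norm is $\|f\|_{\mathcal{H}}^2=\sum_k|\langle f,\phi_k\rangle|^2/G[k]$. For even $N$, grid points $x_i=\frac{2\pi}{N}i-\pi$, $i=0,\dots,N-1$, with invertible kernel matrix. $\mathcal{T}_K^Nf(x)=\frac1N\sum_{i=0}^{N-1}K(x,x_i)f(x_i)$.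 $\|G_\ell\|_1=\sum_m|G[mN+\ell]|$, $\|G_\ell\|^2=\sum_m|G[mN+\ell]|^2$. *)

theory Defs
  imports "HOL-Analysis.Analysis" "HOL-Library.Complex_Order" "Jordan_Normal_Form.Matrix"
begin

text \<open>theta mod T := ((theta + pi) mod 2 pi) - pi, with the real modulo written via floor.\<close>
definition tmod :: "real \<Rightarrow> real" where
  "tmod \<theta> = ((\<theta> + pi) - 2 * pi * of_int \<lfloor>(\<theta> + pi) / (2 * pi)\<rfloor>) - pi"

definition phi :: "int \<Rightarrow> real \<Rightarrow> complex" where
  "phi k x = exp (\<i> * of_int k * of_real x)"

definition kern :: "(real \<Rightarrow> real) \<Rightarrow> real \<Rightarrow> real \<Rightarrow> real \<Rightarrow> real" where
  "kern g M x x' = g (M * tmod (x - x'))"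

definition Gcoef :: "(real \<Rightarrow> real) \<Rightarrow> real \<Rightarrow> int \<Rightarrow> complex" where
  "Gcoef g M k = of_real (1 / (2 * pi)) *
     integral {-pi..pi} (\<lambda>\<theta>. of_real (g (M * \<theta>)) * exp (- \<i> * of_int k * of_real \<theta>))"

definition muT :: "real measure" where
  "muT = uniform_measure lborel {-pi..<pi}"

definition L2inner :: "(real \<Rightarrow> complex) \<Rightarrow> (real \<Rightarrow> complex) \<Rightarrow> complex" where
  "L2inner f h = (LINT x|muT. f x * cnj (h x))"

definition L2norm :: "(real \<Rightarrow> complex) \<Rightarrow> real" where
  "L2norm f = sqrt (LINT x|muT. (cmod (f x))\<^sup>2)"

definition rkhs_norm :: "(real \<Rightarrow> real) \<Rightarrow> real \<Rightarrow> (real \<Rightarrow> complex) \<Rightarrow> real" where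
  "rkhs_norm g M f = sqrt (\<Sum>\<^sub>\<infinity>k\<in>UNIV. (cmod (L2inner f (phi k)))\<^sup>2 / Re (Gcoef g M k))"

definition G1norm :: "(real \<Rightarrow> real) \<Rightarrow> real \<Rightarrow> nat \<Rightarrow> nat \<Rightarrow> real" where
  "G1norm g M N l = (\<Sum>\<^sub>\<infinity>m\<in>(UNIV::int set). cmod (Gcoef g M (m * int N + int l)))"

definition G2norm :: "(real \<Rightarrow> real) \<Rightarrow> real \<Rightarrow> nat \<Rightarrow> nat \<Rightarrow> real" where
  "G2norm g M N l = sqrt (\<Sum>\<^sub>\<infinity>m\<in>(UNIV::int set). (cmod (Gcoef g M (m * int N + int l)))\<^sup>2)"

definition grid :: "nat \<Rightarrow> nat \<Rightarrow> real" where
  "grid N i = 2 * pi / real N * real i - pi"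

definition TKN :: "(real \<Rightarrow> real) \<Rightarrow> real \<Rightarrow> nat \<Rightarrow> (real \<Rightarrow> complex) \<Rightarrow> real \<Rightarrow> complex" where
  "TKN g M N f x = of_real (1 / real N) *
     (\<Sum>i<N. of_real (kern g M x (grid N i)) * f (grid N i))"

definition psi :: "(real \<Rightarrow> real) \<Rightarrow> real \<Rightarrow> nat \<Rightarrow> nat \<Rightarrow> real \<Rightarrow> complex" where
  "psi g M N l x = of_real (1 / sqrt (G1norm g M N l)) *
     (\<Sum>\<^sub>\<infinity>m\<in>(UNIV::int set). Gcoef g M (m * int N + int l) * phi (m * int N + int l) x)"

definition kernel_matrix :: "(real \<Rightarrow> real) \<Rightarrow> real \<Rightarrow> nat \<Rightarrow> real mat" where
  "kernel_matrix g M N = mat N N (\<lambda>(i, k). kern g M (grid N i) (grid N k))"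

definition pos_def_kernel :: "(real \<Rightarrow> real \<Rightarrow> real) \<Rightarrow> bool" where
  "pos_def_kernel K \<longleftrightarrow> (\<forall>n (xs :: nat \<Rightarrow> real) (c :: nat \<Rightarrow> real).
     (\<forall>i<n. xs i \<in> {-pi..<pi}) \<longrightarrow> 0 \<le> (\<Sum>i<n. \<Sum>k<n. c i * c k * K (xs i) (xs k)))"

end

theory Submission
  imports Defs "HOL-Computational_Algebra.Polynomial"
begin

(* Since g(M\<theta>) is continuous and even with absolutely summable Fourier coefficients G[k],
   it equals its Fourier series on [-pi,pi]: the difference is an even continuous function
   orthogonal to every cos(n\<theta>), hence orthogonal to every polynomial in cos \<theta>, hence zero by
   Stone-Weierstrass. So K(x,x') = \<Sum>k G[k] phi_k(x - x').  On the grid, phi_j sums to N if N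
   divides j and to 0 otherwise (N even makes phi_(mN) = 1 at every grid point), so the quadrature
   (1/N) \<Sum>i K(x,x_i) phi_l(x_i) keeps exactly the frequencies congruent to l mod N; since
   psi_l(x_i) = sqrt(||G_l||_1) phi_l(x_i), this is the eigenvalue equation.  The norms and the
   orthogonality are Parseval's identity for absolutely summable Fourier series, the residue
   classes of distinct l being disjoint.  Finally ||G_l||_1 > 0, as ||psi_l||_H = 1 requires,
   for otherwise the vector (Re phi_l(x_i))_i would lie in the kernel of the invertible kernel
   matrix. *)

section \<open>The Fourier basis and the L2 inner product\<close>

lemma norm_phi [simp]: "norm (phi k x) = 1"
  unfolding phi_def by simp

lemma cnj_phi: "cnj (phi k x) = phi (-k) x"
  unfolding phi_def by (simp add: exp_cnj)

lemma phi_mult: "phi j x * phi k x = phi (j + k) x"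
  unfolding phi_def by (simp add: exp_add[symmetric] algebra_simps)

lemma phi_minus_arg: "phi k (-x) = phi (-k) x"
  unfolding phi_def by simp

lemma phi_add_arg: "phi k (x + y) = phi k x * phi k y"
  unfolding phi_def by (simp add: algebra_simps exp_add[symmetric])

lemma phi_of_nat_mult_arg: "phi k (real n * x) = phi k x ^ n"
  unfolding phi_def by (simp add: exp_of_nat_mult[symmetric] algebra_simps)

lemma phi_int_mult: "phi (j * k) x = phi j (of_int k * x)"
  unfolding phi_def by (simp add: algebra_simps)

lemma phi_periodic: "phi k (x + 2 * pi * of_int n) = phi k x"
proof -
  have "phi k (x + 2 * pi * of_int n) = exp (\<i> * of_int k * of_real x + \<i> * (of_int (k * n) * (of_real pi * 2)))"
    unfolding phi_def by (simp add: algebra_simps)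
  also have "\<dots> = phi k x"
    unfolding exp_plus_2pin phi_def ..
  finally show ?thesis .
qed

lemma continuous_on_phi [continuous_intros]: "continuous_on A (phi k)"
  unfolding phi_def by (intro continuous_intros)

lemma phi_has_vector_derivative: "(phi k has_vector_derivative (\<i> * of_int k * phi k x)) (at x within A)"
proof -
  have "((\<lambda>z. exp (\<i> * of_int k * z)) has_field_derivative (\<i> * of_int k * exp (\<i> * of_int k * of_real x))) (at (of_real x))"
    by (auto intro!: derivative_eq_intros)
  from has_vector_derivative_real_field[OF this] show ?thesis
    unfolding phi_def .
qed

lemma integral_phi: "integral {-pi..pi} (phi k) = (if k = 0 then of_real (2 * pi) else 0)"
proof (cases "k = 0")
  case True
  then have "phi k = (\<lambda>x. 1)"
    by (auto simp: phi_def)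
  then show ?thesis
    using True by (simp add: scaleR_conv_of_real)
next
  case False
  have "((\<lambda>x. \<i> * of_int k * phi k x) has_integral (phi k pi - phi k (-pi))) {-pi..pi}"
    by (rule fundamental_theorem_of_calculus) (auto intro: phi_has_vector_derivative)
  moreover have "phi k pi = phi k (-pi)"
    using phi_periodic[of k "-pi" 1] by simp
  ultimately have "((\<lambda>x. \<i> * of_int k * phi k x) has_integral 0) {-pi..pi}"
    by simp
  from has_integral_mult_right[OF this, of "1 / (\<i> * of_int k)"] False
  have "(phi k has_integral 0) {-pi..pi}"
    by simp
  then show ?thesis
    using False by (simp add: integral_unique)
qed

lemma muT_eq_density: "muT = density lborel (\<lambda>x. ennreal (indicator {-pi..<pi} x / (2 * pi)))"
proof -
  have "(indicator {-pi..<pi} x :: ennreal) / ennreal (2 * pi) = ennreal (indicator {-pi..<pi} x / (2 * pi))" for x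
    by (subst divide_ennreal[symmetric]) (auto simp: indicator_def)
  then show ?thesis
    unfolding muT_def uniform_measure_def by simp
qed

lemma integral_muT:
  fixes f :: "real \<Rightarrow> 'b::euclidean_space"
  assumes "continuous_on UNIV f"
  shows "(LINT x|muT. f x) = (1 / (2 * pi)) *\<^sub>R integral {-pi..pi} f"
proof -
  have meas: "f \<in> borel_measurable lborel"
    using assms by (simp add: borel_measurable_continuous_onI)
  have "(LINT x|muT. f x) = (LINT x|lborel. (indicator {-pi..<pi} x / (2 * pi)) *\<^sub>R f x)"
    unfolding muT_eq_density by (rule integral_density) (use meas in auto)
  also have "\<dots> = (LINT x|lborel. (1 / (2 * pi)) *\<^sub>R (indicator {-pi..<pi} x *\<^sub>R f x))"
    by (rule Bochner_Integration.integral_cong) auto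
  also have "\<dots> = (1 / (2 * pi)) *\<^sub>R (LINT x|lborel. indicator {-pi..<pi} x *\<^sub>R f x)"
    by (rule integral_scaleR_right)
  also have "(LINT x|lborel. indicator {-pi..<pi} x *\<^sub>R f x) = (LINT x|lborel. indicator {-pi..pi} x *\<^sub>R f x)"
    by (rule integral_cong_AE)
      (use AE_lborel_singleton[of pi] meas in \<open>auto simp del: indicator_simps of_bool_eq
        intro!: borel_measurable_scaleR, auto simp: indicator_def\<close>)
  also have "\<dots> = integral {-pi..pi} f"
    unfolding set_lebesgue_integral_def[symmetric]
    by (rule set_borel_integral_eq_integral(2))
       (use borel_integrable_compact[of "{-pi..pi}" f] assms
         in \<open>auto simp: set_integrable_def intro: continuous_on_subset\<close>)
  finally show ?thesis .
qed

lemma L2inner_eq_integral: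
  assumes "continuous_on UNIV f" "continuous_on UNIV h"
  shows "L2inner f h = of_real (1 / (2 * pi)) * integral {-pi..pi} (\<lambda>x. f x * cnj (h x))"
proof -
  have "continuous_on UNIV (\<lambda>x. f x * cnj (h x))"
    using assms by (intro continuous_intros)
  then show ?thesis
    unfolding L2inner_def by (simp add: integral_muT scaleR_conv_of_real)
qed

lemma L2inner_scale_left: "L2inner (\<lambda>x. a * f x) h = a * L2inner f h"
  unfolding L2inner_def by (simp add: mult.assoc)

lemma L2inner_scale_right: "L2inner f (\<lambda>x. b * h x) = cnj b * L2inner f h"
  unfolding L2inner_def by (simp add: ac_simps)

lemma L2norm_eq_sqrt_L2inner: "L2norm f = sqrt (Re (L2inner f f))"
proof -
  have "L2inner f f = (LINT x|muT. complex_of_real ((cmod (f x))\<^sup>2))"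
    unfolding L2inner_def complex_norm_square ..
  also have "\<dots> = of_real (LINT x|muT. (cmod (f x))\<^sup>2)"
    by (rule integral_complex_of_real)
  finally show ?thesis
    unfolding L2norm_def by simp
qed

section \<open>Unconditional sums of functions\<close>

lemma abs_summable_on_bound:
  fixes f :: "'i \<Rightarrow> 'b::real_normed_vector"
  assumes "a summable_on UNIV" "\<And>k. norm (f k) \<le> a k"
  shows "(\<lambda>k. norm (f k)) summable_on A"
  using summable_on_subset_banach[OF summable_on_comparison_test[OF assms(1)]] assms(2) by auto

lemma norm_infsum_minus_sum_le:
  fixes f :: "'i \<Rightarrow> 'b::banach"
  assumes a: "a summable_on UNIV" and bound: "\<And>k. norm (f k) \<le> a k" and F: "finite F"
  shows "norm (infsum f UNIV - sum f F) \<le> infsum a UNIV - sum a F"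
proof -
  have f: "f summable_on B" and a': "a summable_on B" for B
    using abs_summable_summable[OF abs_summable_on_bound[OF a bound]] summable_on_subset_banach[OF a]
    by blast+
  have "infsum h UNIV = sum h F + infsum h (UNIV - F)" if "\<And>B. h summable_on B" for h :: "'i \<Rightarrow> 'c::banach"
  proof -
    have "infsum h UNIV = infsum h (F \<union> (UNIV - F))"
      by simp
    also have "\<dots> = infsum h F + infsum h (UNIV - F)"
      by (rule infsum_Un_disjoint) (use that in auto)
    finally show ?thesis
      using F by simp
  qed
  from this[OF f] this[OF a'] have "infsum f UNIV - sum f F = infsum f (UNIV - F)"
    and "infsum a UNIV - sum a F = infsum a (UNIV - F)"
    by (simp_all add: algebra_simps)
  moreover have "norm (infsum f (UNIV - F)) \<le> infsum a (UNIV - F)"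
    by (rule norm_infsum_le[OF has_sum_infsum[OF f] has_sum_infsum[OF a']]) (use bound in auto)
  ultimately show ?thesis
    by simp
qed

lemma uniform_limit_infsum:
  fixes f :: "'i \<Rightarrow> 'x \<Rightarrow> 'b::banach"
  assumes a: "a summable_on UNIV" and bound: "\<And>k x. x \<in> A \<Longrightarrow> norm (f k x) \<le> a k"
  shows "uniform_limit A (\<lambda>F x. \<Sum>k\<in>F. f k x) (\<lambda>x. \<Sum>\<^sub>\<infinity>k. f k x) (finite_subsets_at_top UNIV)"
  unfolding uniform_limit_iff
proof (intro allI impI)
  fix e :: real
  assume "e > 0"
  then have "\<forall>\<^sub>F F in finite_subsets_at_top UNIV. dist (sum a F) (infsum a UNIV) < e"
    using infsum_tendsto[OF a] tendstoD by blast
  moreover have "\<forall>\<^sub>F F in finite_subsets_at_top UNIV. finite F"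
    by auto
  ultimately show "\<forall>\<^sub>F F in finite_subsets_at_top UNIV. \<forall>x\<in>A. dist (\<Sum>k\<in>F. f k x) (\<Sum>\<^sub>\<infinity>k. f k x) < e"
  proof eventually_elim
    case (elim F)
    show ?case
    proof
      fix x
      assume "x \<in> A"
      have "dist (\<Sum>k\<in>F. f k x) (\<Sum>\<^sub>\<infinity>k. f k x) \<le> infsum a UNIV - sum a F"
        unfolding dist_norm norm_minus_commute[of "sum _ F"]
        by (rule norm_infsum_minus_sum_le[OF a _ elim(2)]) (use bound \<open>x \<in> A\<close> in auto)
      also have "\<dots> < e"
        using elim(1) by (simp add: dist_real_def)
      finally show "dist (\<Sum>k\<in>F. f k x) (\<Sum>\<^sub>\<infinity>k. f k x) < e" .
    qed
  qed
qed

lemma continuous_on_infsum: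
  fixes f :: "'i \<Rightarrow> 'x::topological_space \<Rightarrow> 'b::banach"
  assumes "a summable_on UNIV" "\<And>k x. x \<in> A \<Longrightarrow> norm (f k x) \<le> a k"
    and "\<And>k. continuous_on A (f k)"
  shows "continuous_on A (\<lambda>x. \<Sum>\<^sub>\<infinity>k. f k x)"
  by (rule uniform_limit_theorem[OF _ uniform_limit_infsum[OF assms(1,2)]])
     (auto intro!: continuous_on_sum assms(3))

lemma has_sum_integral_infsum:
  fixes f :: "'i \<Rightarrow> real \<Rightarrow> 'b::banach"
  assumes a: "a summable_on UNIV" and bound: "\<And>k x. x \<in> {lo..hi} \<Longrightarrow> norm (f k x) \<le> a k"
    and cont: "\<And>k. continuous_on {lo..hi} (f k)"
  shows "((\<lambda>k. integral {lo..hi} (f k)) has_sum integral {lo..hi} (\<lambda>x. \<Sum>\<^sub>\<infinity>k. f k x)) UNIV"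
proof -
  obtain I J where I: "\<And>F. ((\<lambda>x. \<Sum>k\<in>F. f k x) has_integral I F) {lo..hi}"
    and J: "((\<lambda>x. \<Sum>\<^sub>\<infinity>k. f k x) has_integral J) {lo..hi}"
    and lim: "(I \<longlongrightarrow> J) (finite_subsets_at_top UNIV)"
    by (rule uniform_limit_integral[OF uniform_limit_infsum[OF a bound]])
       (auto intro!: continuous_on_sum cont)
  have "\<forall>\<^sub>F F in finite_subsets_at_top UNIV. I F = (\<Sum>k\<in>F. integral {lo..hi} (f k))"
  proof (rule eventually_finite_subsets_at_top_weakI)
    fix F :: "'i set"
    assume "finite F"
    then have "((\<lambda>x. \<Sum>k\<in>F. f k x) has_integral (\<Sum>k\<in>F. integral {lo..hi} (f k))) {lo..hi}"
      by (intro has_integral_sum integrable_integral integrable_continuous_interval cont)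
    then show "I F = (\<Sum>k\<in>F. integral {lo..hi} (f k))"
      using I has_integral_unique by blast
  qed
  with lim have "((\<lambda>F. \<Sum>k\<in>F. integral {lo..hi} (f k)) \<longlongrightarrow> J) (finite_subsets_at_top UNIV)"
    by (rule Lim_transform_eventually)
  with J show ?thesis
    unfolding has_sum_def by (simp add: integral_unique)
qed

lemma has_sum_sum:
  fixes F :: "'i \<Rightarrow> 'k \<Rightarrow> 'a::topological_comm_monoid_add"
  assumes "finite I" "\<And>i. i \<in> I \<Longrightarrow> (F i has_sum S i) A"
  shows "((\<lambda>k. \<Sum>i\<in>I. F i k) has_sum (\<Sum>i\<in>I. S i)) A"
  using assms by (induction I rule: finite_induct) (simp_all add: has_sum_add)

lemma has_sum_if_eq:
  fixes v :: "'a::{comm_monoid_add,topological_space}"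
  shows "((\<lambda>j. if j = k then v else 0) has_sum v) UNIV"
proof -
  have "((\<lambda>j. if j = k then v else 0) has_sum v) {k}"
    by (rule has_sum_finiteI) auto
  then show ?thesis
    by (subst (asm) has_sum_cong_neutral[where T = UNIV]) auto
qed

lemma infsum_of_real:
  fixes f :: "'i \<Rightarrow> real"
  shows "(\<Sum>\<^sub>\<infinity>k\<in>A. complex_of_real (f k)) = of_real (infsum f A)"
proof (cases "f summable_on A")
  case True
  then show ?thesis
    using has_sum_of_real[OF has_sum_infsum[OF True]] infsumI by blast
next
  case False
  then have "\<not> (\<lambda>k. complex_of_real (f k)) summable_on A"
    using summable_on_Re by fastforce
  then show ?thesis
    using False by (simp add: infsum_not_exists)
qed

section \<open>Absolutely summable Fourier series\<close>

definition fourier_sum :: "(int \<Rightarrow> complex) \<Rightarrow> real \<Rightarrow> complex" where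
  "fourier_sum c x = (\<Sum>\<^sub>\<infinity>k. c k * phi k x)"

lemma continuous_on_fourier_sum:
  assumes "(\<lambda>k. norm (c k)) summable_on UNIV"
  shows "continuous_on A (fourier_sum c)"
  unfolding fourier_sum_def
  by (rule continuous_on_infsum[OF assms]) (auto simp: norm_mult intro!: continuous_intros)

lemma norm_fourier_sum_le:
  assumes c: "(\<lambda>k. norm (c k)) summable_on UNIV"
  shows "norm (fourier_sum c x) \<le> (\<Sum>\<^sub>\<infinity>k. norm (c k))"
proof -
  have "(\<lambda>k. c k * phi k x) summable_on UNIV"
    by (rule abs_summable_summable, rule abs_summable_on_bound[OF c]) (simp add: norm_mult)
  then show ?thesis
    unfolding fourier_sum_def
    by (rule norm_infsum_le[OF has_sum_infsum has_sum_infsum[OF c]]) (simp add: norm_mult)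
qed

lemma fourier_sum_periodic: "fourier_sum c (x + 2 * pi * of_int n) = fourier_sum c x"
  unfolding fourier_sum_def by (simp add: phi_periodic)

lemma fourier_sum_minus:
  assumes "\<And>k. c (-k) = c k"
  shows "fourier_sum c (-x) = fourier_sum c x"
proof -
  have "fourier_sum c (-x) = (\<Sum>\<^sub>\<infinity>k. c (-k) * phi (-k) x)"
    unfolding fourier_sum_def by (simp add: phi_minus_arg assms)
  also have "\<dots> = fourier_sum c x"
    unfolding fourier_sum_def by (rule infsum_reindex_bij_witness[of UNIV uminus uminus]) auto
  finally show ?thesis .
qed

lemma cnj_fourier_sum: "cnj (fourier_sum c x) = fourier_sum (\<lambda>k. cnj (c (-k))) x"
proof -
  have "cnj (fourier_sum c x) = (\<Sum>\<^sub>\<infinity>k. cnj (c k) * phi (-k) x)"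
    unfolding fourier_sum_def infsum_cnj[symmetric] by (simp add: cnj_phi)
  also have "\<dots> = fourier_sum (\<lambda>k. cnj (c (-k))) x"
    unfolding fourier_sum_def by (rule infsum_reindex_bij_witness[of UNIV uminus uminus]) auto
  finally show ?thesis .
qed

lemma integral_fourier_sum_mult_phi:
  assumes c: "(\<lambda>k. norm (c k)) summable_on UNIV"
  shows "integral {-pi..pi} (\<lambda>x. fourier_sum c x * phi k x) = of_real (2 * pi) * c (-k)"
proof -
  have "((\<lambda>j. integral {-pi..pi} (\<lambda>x. c j * phi j x * phi k x)) has_sum
          integral {-pi..pi} (\<lambda>x. \<Sum>\<^sub>\<infinity>j. c j * phi j x * phi k x)) UNIV"
    by (rule has_sum_integral_infsum[OF c]) (auto simp: norm_mult intro!: continuous_intros)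
  moreover have "integral {-pi..pi} (\<lambda>x. c j * phi j x * phi k x) = (if j = -k then of_real (2 * pi) * c (-k) else 0)" for j
    using integral_phi[of "j + k"] by (auto simp: mult.assoc phi_mult)
  moreover have "(\<lambda>x. \<Sum>\<^sub>\<infinity>j. c j * phi j x * phi k x) = (\<lambda>x. fourier_sum c x * phi k x)"
    unfolding fourier_sum_def by (simp add: infsum_cmult_left')
  ultimately have "((\<lambda>j. if j = -k then of_real (2 * pi) * c (-k) else 0) has_sum
      integral {-pi..pi} (\<lambda>x. fourier_sum c x * phi k x)) UNIV"
    by simp
  with has_sum_if_eq show ?thesis
    by (rule has_sum_unique[symmetric])
qed

lemma integral_fourier_sum_mult_cnj:
  assumes c: "(\<lambda>k. norm (c k)) summable_on UNIV" and d: "(\<lambda>k. norm (d k)) summable_on UNIV"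
  shows "integral {-pi..pi} (\<lambda>x. fourier_sum c x * cnj (fourier_sum d x)) = of_real (2 * pi) * (\<Sum>\<^sub>\<infinity>k. c k * cnj (d k))"
proof -
  define e where "e k = cnj (d (-k))" for k
  have e: "(\<lambda>k. norm (e k)) summable_on UNIV"
    using d summable_on_reindex[of uminus UNIV "\<lambda>k. norm (d k)"] by (simp add: e_def o_def)
  have "((\<lambda>j. integral {-pi..pi} (\<lambda>x. c j * phi j x * fourier_sum e x)) has_sum
          integral {-pi..pi} (\<lambda>x. \<Sum>\<^sub>\<infinity>j. c j * phi j x * fourier_sum e x)) UNIV"
  proof (rule has_sum_integral_infsum[OF summable_on_cmult_left[OF c]])
    show "norm (c j * phi j x * fourier_sum e x) \<le> norm (c j) * (\<Sum>\<^sub>\<infinity>k. norm (e k))" for j x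
      using norm_fourier_sum_le[OF e, of x] by (simp add: norm_mult mult_left_mono)
    show "continuous_on {-pi..pi} (\<lambda>x. c j * phi j x * fourier_sum e x)" for j
      by (intro continuous_intros continuous_on_fourier_sum[OF e])
  qed
  moreover have "integral {-pi..pi} (\<lambda>x. c j * phi j x * fourier_sum e x) = of_real (2 * pi) * (c j * cnj (d j))" for j
  proof -
    have "(\<lambda>x. c j * phi j x * fourier_sum e x) = (\<lambda>x. c j * (fourier_sum e x * phi j x))"
      by (simp add: fun_eq_iff ac_simps)
    then have "integral {-pi..pi} (\<lambda>x. c j * phi j x * fourier_sum e x) =
        c j * integral {-pi..pi} (\<lambda>x. fourier_sum e x * phi j x)"
      by (simp only: integral_mult_right)
    then show ?thesis
      by (simp add: integral_fourier_sum_mult_phi[OF e] e_def)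
  qed
  moreover have "(\<lambda>x. \<Sum>\<^sub>\<infinity>j. c j * phi j x * fourier_sum e x) = (\<lambda>x. fourier_sum c x * cnj (fourier_sum d x))"
    unfolding cnj_fourier_sum e_def[symmetric] unfolding fourier_sum_def by (simp add: infsum_cmult_left')
  ultimately have "((\<lambda>j. of_real (2 * pi) * (c j * cnj (d j))) has_sum
      integral {-pi..pi} (\<lambda>x. fourier_sum c x * cnj (fourier_sum d x))) UNIV"
    by simp
  then have "integral {-pi..pi} (\<lambda>x. fourier_sum c x * cnj (fourier_sum d x)) =
      (\<Sum>\<^sub>\<infinity>j. of_real (2 * pi) * (c j * cnj (d j)))"
    by (rule infsumI[symmetric])
  then show ?thesis
    by (simp only: infsum_cmult_right')
qed

lemma L2inner_fourier_sum_phi: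
  assumes c: "(\<lambda>k. norm (c k)) summable_on UNIV"
  shows "L2inner (fourier_sum c) (phi k) = c k"
proof -
  have "L2inner (fourier_sum c) (phi k) = of_real (1 / (2 * pi)) * integral {-pi..pi} (\<lambda>x. fourier_sum c x * phi (-k) x)"
    by (subst L2inner_eq_integral) (auto intro!: continuous_intros continuous_on_fourier_sum[OF c] simp: cnj_phi)
  then show ?thesis
    by (simp add: integral_fourier_sum_mult_phi[OF c])
qed

lemma L2inner_fourier_sum:
  assumes c: "(\<lambda>k. norm (c k)) summable_on UNIV" and d: "(\<lambda>k. norm (d k)) summable_on UNIV"
  shows "L2inner (fourier_sum c) (fourier_sum d) = (\<Sum>\<^sub>\<infinity>k. c k * cnj (d k))"
  by (subst L2inner_eq_integral)
     (auto intro!: continuous_on_fourier_sum c d simp: integral_fourier_sum_mult_cnj[OF c d])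

section \<open>Even functions with vanishing Fourier coefficients\<close>

lemma integral_mult_cos_power_mult_cos:
  fixes f :: "real \<Rightarrow> real"
  assumes cont: "continuous_on {-pi..pi} f"
    and orth: "\<And>n::nat. integral {-pi..pi} (\<lambda>t. f t * cos (real n * t)) = 0"
  shows "integral {-pi..pi} (\<lambda>t. f t * cos t ^ n * cos (of_int k * t)) = 0"
proof (induction n arbitrary: k)
  case 0
  have "cos (of_int k * t) = cos (real (nat \<bar>k\<bar>) * t)" for t
    by (cases "k \<ge> 0") (auto simp: minus_mult_left[symmetric] simp del: minus_mult_left mult_minus_left)
  then show ?case
    using orth[of "nat \<bar>k\<bar>"] by simp
next
  case (Suc n)
  have eq: "f t * cos t ^ Suc n * cos (of_int k * t) =
      f t * cos t ^ n * cos (of_int (k - 1) * t) / 2 + f t * cos t ^ n * cos (of_int (k + 1) * t) / 2" for t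
  proof -
    have "cos t * cos (of_int k * t) = (cos (of_int (k - 1) * t) + cos (of_int (k + 1) * t)) / 2"
      using cos_times_cos[of "of_int k * t" t] by (simp add: mult.commute ring_distribs)
    then have "f t * cos t ^ Suc n * cos (of_int k * t) =
        f t * cos t ^ n * ((cos (of_int (k - 1) * t) + cos (of_int (k + 1) * t)) / 2)"
      by (simp add: ac_simps)
    then show ?thesis
      by (simp add: field_simps)
  qed
  have "integral {-pi..pi} (\<lambda>t. f t * cos t ^ Suc n * cos (of_int k * t)) =
    integral {-pi..pi} (\<lambda>t. f t * cos t ^ n * cos (of_int (k - 1) * t) / 2 + f t * cos t ^ n * cos (of_int (k + 1) * t) / 2)"
    by (simp only: eq)
  also have "\<dots> = integral {-pi..pi} (\<lambda>t. f t * cos t ^ n * cos (of_int (k - 1) * t)) / 2 +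
      integral {-pi..pi} (\<lambda>t. f t * cos t ^ n * cos (of_int (k + 1) * t)) / 2"
    by (subst integral_add) (auto intro!: integrable_on_divide integrable_continuous_interval continuous_intros cont)
  finally show ?case
    by (simp del: of_int_diff of_int_add add: Suc.IH)
qed

lemma integral_mult_poly_cos:
  fixes f :: "real \<Rightarrow> real"
  assumes cont: "continuous_on {-pi..pi} f"
    and orth: "\<And>n::nat. integral {-pi..pi} (\<lambda>t. f t * cos (real n * t)) = 0"
  shows "integral {-pi..pi} (\<lambda>t. f t * poly p (cos t)) = 0"
proof -
  have power: "integral {-pi..pi} (\<lambda>t. f t * cos t ^ i) = 0" for i
    using integral_mult_cos_power_mult_cos[OF cont orth, of i 0] by simp
  have "integral {-pi..pi} (\<lambda>t. f t * poly p (cos t)) =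
      integral {-pi..pi} (\<lambda>t. \<Sum>i\<le>degree p. coeff p i * (f t * cos t ^ i))"
    by (simp add: poly_altdef sum_distrib_left ac_simps)
  also have "\<dots> = 0"
    by (subst integral_sum) (auto intro!: integrable_continuous_interval continuous_intros cont simp: power)
  finally show ?thesis .
qed

lemma even_approx_poly_cos:
  fixes f :: "real \<Rightarrow> real"
  assumes cont: "continuous_on {-pi..pi} f"
    and even: "\<And>t. t \<in> {-pi..pi} \<Longrightarrow> f (-t) = f t"
    and "e > 0"
  obtains p where "\<And>x. x \<in> {-pi..pi} \<Longrightarrow> \<bar>f x - poly p (cos x)\<bar> < e"
proof -
  define P where "P = (\<lambda>h::real \<Rightarrow> real. \<exists>p. h = (\<lambda>x. poly p (cos x)))"
  have "\<exists>h. P h \<and> (\<forall>x\<in>{0..pi}. \<bar>f x - h x\<bar> < e)"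
  proof (rule Stone_Weierstrass_HOL)
    show "P (\<lambda>x. c)" for c
      unfolding P_def by (rule exI[of _ "[:c:]"]) simp
    show "continuous_on {0..pi} h" if "P h" for h
      using that unfolding P_def by (auto intro!: continuous_intros)
    show "P (\<lambda>x. h x + h' x)" "P (\<lambda>x. h x * h' x)" if "P h \<and> P h'" for h h'
    proof -
      from that obtain p q where "h = (\<lambda>x. poly p (cos x))" "h' = (\<lambda>x. poly q (cos x))"
        unfolding P_def by blast
      then show "P (\<lambda>x. h x + h' x)" "P (\<lambda>x. h x * h' x)"
        unfolding P_def by (simp_all add: exI[of _ "p + q"] exI[of _ "p * q"])
    qed
    show "\<exists>h. P h \<and> h x \<noteq> h y" if "x \<in> {0..pi} \<and> y \<in> {0..pi} \<and> x \<noteq> y" for x y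
      using that cos_inj_pi unfolding P_def by (intro exI[of _ cos]) (auto intro!: exI[of _ "[:0, 1:]"])
    show "continuous_on {0..pi} f"
      using cont by (rule continuous_on_subset) auto
  qed (use \<open>e > 0\<close> in auto)
  then obtain p where p: "\<And>x. x \<in> {0..pi} \<Longrightarrow> \<bar>f x - poly p (cos x)\<bar> < e"
    unfolding P_def by blast
  have "\<bar>f x - poly p (cos x)\<bar> < e" if "x \<in> {-pi..pi}" for x
  proof (cases "x \<ge> 0")
    case True
    with that p show ?thesis by simp
  next
    case False
    with that p[of "-x"] even[of x] show ?thesis by simp
  qed
  then show ?thesis
    using that by blast
qed

lemma even_orthogonal_cos_imp_zero:
  fixes f :: "real \<Rightarrow> real"
  assumes cont: "continuous_on {-pi..pi} f"
    and even: "\<And>t. t \<in> {-pi..pi} \<Longrightarrow> f (-t) = f t"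
    and orth: "\<And>n::nat. integral {-pi..pi} (\<lambda>t. f t * cos (real n * t)) = 0"
    and t: "t \<in> {-pi..pi}"
  shows "f t = 0"
proof -
  obtain B where B: "B > 0" "\<And>x. x \<in> {-pi..pi} \<Longrightarrow> \<bar>f x\<bar> \<le> B"
    using compact_imp_bounded[OF compact_continuous_image[OF cont compact_Icc]]
    unfolding bounded_pos by auto
  have sq_int: "(\<lambda>x. f x * f x) integrable_on {-pi..pi}"
    by (intro integrable_continuous_interval continuous_intros cont)
  \<comment> \<open>f is orthogonal to every polynomial in cos, which approximates f uniformly\<close>
  have small: "integral {-pi..pi} (\<lambda>x. f x * f x) \<le> 2 * pi * B * e" if "e > 0" for e
  proof -
    obtain p where p: "\<And>x. x \<in> {-pi..pi} \<Longrightarrow> \<bar>f x - poly p (cos x)\<bar> < e"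
      using even_approx_poly_cos[OF cont even \<open>e > 0\<close>] by blast
    have "(\<lambda>x. f x * poly p (cos x)) integrable_on {-pi..pi}"
      by (intro integrable_continuous_interval continuous_intros cont)
    then have "integral {-pi..pi} (\<lambda>x. f x * f x) - integral {-pi..pi} (\<lambda>x. f x * poly p (cos x)) =
        integral {-pi..pi} (\<lambda>x. f x * (f x - poly p (cos x)))"
      unfolding right_diff_distrib by (rule integral_diff[OF sq_int, symmetric])
    then have "integral {-pi..pi} (\<lambda>x. f x * f x) = integral {-pi..pi} (\<lambda>x. f x * (f x - poly p (cos x)))"
      by (simp add: integral_mult_poly_cos[OF cont orth])
    also have "\<dots> \<le> integral {-pi..pi} (\<lambda>x. B * e)"
    proof (rule integral_le)
      fix x
      assume x: "x \<in> {-pi..pi}"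
      have "f x * (f x - poly p (cos x)) \<le> \<bar>f x\<bar> * \<bar>f x - poly p (cos x)\<bar>"
        by (simp flip: abs_mult)
      also have "\<dots> \<le> B * e"
        using B(2)[OF x] p[OF x] B(1) by (intro mult_mono) auto
      finally show "f x * (f x - poly p (cos x)) \<le> B * e" .
    qed (auto intro!: integrable_continuous_interval continuous_intros cont)
    finally show ?thesis
      by (simp add: ac_simps)
  qed
  have "integral {-pi..pi} (\<lambda>x. f x * f x) \<le> 0"
  proof (rule field_le_epsilon)
    fix e :: real
    assume "e > 0"
    then have "integral {-pi..pi} (\<lambda>x. f x * f x) \<le> 2 * pi * B * (e / (2 * pi * B))"
      using B(1) by (intro small) simp
    then show "integral {-pi..pi} (\<lambda>x. f x * f x) \<le> 0 + e"
      using B(1) by (simp add: field_simps)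
  qed
  then have "integral {-pi..pi} (\<lambda>x. f x * f x) = 0"
    using integral_nonneg[OF sq_int] by force
  moreover have "continuous_on {-pi..pi} (\<lambda>x. f x * f x)"
    using cont by (rule continuous_on_mult[OF _ cont])
  ultimately have "\<forall>x\<in>{-pi..pi}. f x * f x = 0"
    using integral_eq_0_iff[of "-pi" pi "\<lambda>x. f x * f x"] by simp
  with t show ?thesis
    by simp
qed

lemma fourier_coeffs_zero_imp_zero:
  fixes h :: "real \<Rightarrow> complex"
  assumes cont: "continuous_on {-pi..pi} h"
    and even: "\<And>t. t \<in> {-pi..pi} \<Longrightarrow> h (-t) = h t"
    and coeffs: "\<And>k. integral {-pi..pi} (\<lambda>t. h t * phi k t) = 0"
    and t: "t \<in> {-pi..pi}"
  shows "h t = 0"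
proof -
  have int: "(\<lambda>t. h t * phi k t) integrable_on {-pi..pi}" for k
    by (intro integrable_continuous_interval continuous_intros cont)
  have cos_phi: "of_real (cos (real n * t)) = (phi (int n) t + phi (- int n) t) / 2" for n t
    unfolding phi_def cos_of_real[symmetric] cos_exp_eq by (simp add: algebra_simps)
  have orth: "integral {-pi..pi} (\<lambda>t. h t * of_real (cos (real n * t))) = 0" for n
  proof -
    have "integral {-pi..pi} (\<lambda>t. h t * of_real (cos (real n * t))) =
        integral {-pi..pi} (\<lambda>t. (h t * phi (int n) t + h t * phi (- int n) t) / 2)"
      by (simp add: cos_phi distrib_left)
    also have "\<dots> = 0"
      using int by (simp add: integral_add integral_divide coeffs)
    finally show ?thesis .
  qed
  have "F (h t) = 0" if F: "bounded_linear F" for F :: "complex \<Rightarrow> real"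
  proof (rule even_orthogonal_cos_imp_zero[OF _ _ _ t])
    show "continuous_on {-pi..pi} (\<lambda>t. F (h t))"
      using continuous_on_compose[OF cont linear_continuous_on[OF F]] by (simp add: o_def)
    show "F (h (-s)) = F (h s)" if "s \<in> {-pi..pi}" for s
      using even[OF that] by simp
    fix n :: nat
    have scale: "F (h s * of_real r) = F (h s) * r" for s r
      using linear_scale[OF bounded_linear.linear[OF F], of r "h s"] by (simp add: scaleR_conv_of_real mult.commute)
    have "(\<lambda>t. h t * of_real (cos (real n * t))) integrable_on {-pi..pi}"
      by (intro integrable_continuous_interval continuous_intros cont)
    from integral_linear[OF this F]
    have "integral {-pi..pi} (\<lambda>t. F (h t) * cos (real n * t)) =
        F (integral {-pi..pi} (\<lambda>t. h t * of_real (cos (real n * t))))"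
      by (simp add: o_def scale)
    then show "integral {-pi..pi} (\<lambda>t. F (h t) * cos (real n * t)) = 0"
      by (simp add: orth linear_0[OF bounded_linear.linear[OF F]])
  qed
  from this[OF bounded_linear_Re] this[OF bounded_linear_Im] show ?thesis
    by (simp add: complex_eq_iff)
qed

section \<open>Residue classes on the grid\<close>

lemma phi_grid_eq_1:
  assumes "N > 0" "even N" "int N dvd j"
  shows "phi j (grid N i) = 1"
proof -
  obtain q where q: "j = q * int N"
    using assms(3) by (metis dvd_def mult.commute)
  obtain r where r: "N = 2 * r"
    using assms(2) by blast
  have grid: "of_int (int N) * grid N i = 0 + 2 * pi * of_int (int i - int r)"
    unfolding grid_def using assms(1) r by (simp add: field_simps)
  have "phi j (grid N i) = phi q (of_int (int N) * grid N i)"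
    unfolding q phi_int_mult ..
  also have "\<dots> = 1"
    unfolding grid phi_periodic by (simp add: phi_def)
  finally show ?thesis .
qed

lemma sum_phi_grid:
  assumes N: "N > 0" "even N"
  shows "(\<Sum>i<N. phi j (grid N i)) = (if int N dvd j then of_nat N else 0)"
proof (cases "int N dvd j")
  case True
  then show ?thesis
    using phi_grid_eq_1[OF N True] by simp
next
  case False
  define w where "w = phi j (2 * pi / real N)"
  have terms: "phi j (grid N i) = phi j (-pi) * w ^ i" for i
  proof -
    have "grid N i = -pi + real i * (2 * pi / real N)"
      unfolding grid_def by simp
    then show ?thesis
      unfolding w_def by (simp only: phi_add_arg phi_of_nat_mult_arg)
  qed
  have "w ^ N = phi j (0 + 2 * pi * of_int 1)"
    unfolding w_def phi_of_nat_mult_arg[symmetric] using N by simp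
  then have wN: "w ^ N = 1"
    unfolding phi_periodic by (simp add: phi_def)
  have "w \<noteq> 1"
  proof
    assume "w = 1"
    then obtain n :: int where "of_int j * (2 * pi / real N) = of_int (2 * n) * pi"
      unfolding w_def phi_def exp_eq_1 by auto
    then have "real_of_int j = real_of_int (n * int N)"
      using N by (simp add: field_simps)
    then have "j = n * int N"
      by (simp only: of_int_eq_iff)
    with False show False
      by simp
  qed
  then have "(\<Sum>i<N. w ^ i) = 0"
    using geometric_sum[of w N] wN by simp
  then show ?thesis
    using False by (simp add: terms sum_distrib_left[symmetric])
qed

definition class_coeffs :: "nat \<Rightarrow> nat \<Rightarrow> (int \<Rightarrow> complex) \<Rightarrow> int \<Rightarrow> complex" where
  "class_coeffs N l c k = (if int N dvd (k - int l) then c k else 0)"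

lemma class_coeffs_abs_summable:
  assumes "(\<lambda>k. norm (c k)) summable_on UNIV"
  shows "(\<lambda>k. norm (class_coeffs N l c k)) summable_on UNIV"
  by (rule summable_on_comparison_test[OF assms]) (auto simp: class_coeffs_def)

lemma class_coeffs_orthogonal:
  assumes "k < N" "l < N" "k \<noteq> l"
  shows "class_coeffs N l c j * cnj (class_coeffs N k d j) = 0"
proof (rule ccontr)
  assume "class_coeffs N l c j * cnj (class_coeffs N k d j) \<noteq> 0"
  then have "int N dvd j - int k" "int N dvd j - int l"
    unfolding class_coeffs_def by (auto split: if_splits)
  then have "int N dvd (j - int k) - (j - int l)"
    by (rule dvd_diff)
  then have "int N dvd int l - int k"
    by simp
  moreover have "int l - int k \<noteq> 0"
    using assms by simp
  ultimately have "\<bar>int N\<bar> \<le> \<bar>int l - int k\<bar>"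
    by (metis dvd_imp_le_int)
  with assms show False
    by (auto simp: abs_if split: if_splits)
qed

lemma infsum_residue_class:
  assumes "N > 0"
  shows "(\<Sum>\<^sub>\<infinity>m. f (m * int N + int l)) = (\<Sum>\<^sub>\<infinity>k. if int N dvd (k - int l) then f k else 0)"
proof -
  have inj: "inj (\<lambda>m. m * int N + int l)"
    using assms by (auto intro: injI)
  have "range (\<lambda>m. m * int N + int l) = {k. int N dvd (k - int l)}"
    by (auto simp: algebra_simps elim!: dvdE intro: image_eqI[where x = "_ div int N"])
  then have "(\<Sum>\<^sub>\<infinity>m. f (m * int N + int l)) = infsum f {k. int N dvd (k - int l)}"
    using infsum_reindex[OF inj, of f] by (simp add: o_def)
  also have "\<dots> = (\<Sum>\<^sub>\<infinity>k. if int N dvd (k - int l) then f k else 0)"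
    by (rule infsum_cong_neutral) auto
  finally show ?thesis .
qed

lemma psi_eq_fourier_sum:
  assumes "N > 0"
  shows "psi g M N l = (\<lambda>x. of_real (1 / sqrt (G1norm g M N l)) * fourier_sum (class_coeffs N l (Gcoef g M)) x)"
proof
  fix x
  have "(\<Sum>\<^sub>\<infinity>m. Gcoef g M (m * int N + int l) * phi (m * int N + int l) x) =
      fourier_sum (class_coeffs N l (Gcoef g M)) x"
    unfolding infsum_residue_class[OF assms, where f = "\<lambda>k. Gcoef g M k * phi k x"] fourier_sum_def
    by (rule infsum_cong) (simp add: class_coeffs_def)
  then show "psi g M N l x = of_real (1 / sqrt (G1norm g M N l)) * fourier_sum (class_coeffs N l (Gcoef g M)) x"
    unfolding psi_def by simp
qed

lemma G1norm_eq_infsum: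
  assumes "N > 0"
  shows "G1norm g M N l = (\<Sum>\<^sub>\<infinity>k. norm (class_coeffs N l (Gcoef g M) k))"
  unfolding G1norm_def infsum_residue_class[OF assms, where f = "\<lambda>k. norm (Gcoef g M k)"]
  by (rule infsum_cong) (simp add: class_coeffs_def)

lemma G1norm_nonneg: "G1norm g M N l \<ge> 0"
  unfolding G1norm_def by (simp add: infsum_nonneg)

lemma G2norm_eq_infsum:
  assumes "N > 0"
  shows "G2norm g M N l = sqrt (\<Sum>\<^sub>\<infinity>k. (norm (class_coeffs N l (Gcoef g M) k))\<^sup>2)"
  unfolding G2norm_def infsum_residue_class[OF assms, where f = "\<lambda>k. (norm (Gcoef g M k))\<^sup>2"]
  by (intro arg_cong[where f = sqrt] infsum_cong) (simp add: class_coeffs_def)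

lemma fourier_sum_class_coeffs_grid:
  assumes "N > 0" "even N"
  shows "fourier_sum (class_coeffs N l c) (grid N i) = (\<Sum>\<^sub>\<infinity>k. class_coeffs N l c k) * phi (int l) (grid N i)"
proof -
  \<comment> \<open>on the grid, the frequencies of a residue class are indistinguishable\<close>
  have "class_coeffs N l c k * phi k (grid N i) = class_coeffs N l c k * phi (int l) (grid N i)" for k
  proof (cases "int N dvd (k - int l)")
    case True
    then have "phi k (grid N i) = phi (int l) (grid N i) * phi (k - int l) (grid N i)"
      by (simp add: phi_mult)
    with phi_grid_eq_1[OF assms True] show ?thesis
      by simp
  next
    case False
    then show ?thesis
      by (simp add: class_coeffs_def)
  qed
  then have "fourier_sum (class_coeffs N l c) (grid N i) = (\<Sum>\<^sub>\<infinity>k. class_coeffs N l c k * phi (int l) (grid N i))"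
    unfolding fourier_sum_def by (rule infsum_cong)
  then show ?thesis
    by (simp only: infsum_cmult_left')
qed

lemma sum_fourier_sum_grid:
  assumes c: "(\<lambda>k. norm (c k)) summable_on UNIV" and N: "N > 0" "even N"
  shows "(\<Sum>i<N. fourier_sum c (x - grid N i) * phi (int l) (grid N i)) = of_nat N * fourier_sum (class_coeffs N l c) x"
proof -
  define F where "F i k = c k * phi k x * phi (int l - k) (grid N i)" for i k
  have "(F i has_sum fourier_sum c (x - grid N i) * phi (int l) (grid N i)) UNIV" for i
  proof -
    have "F i summable_on UNIV"
      by (rule abs_summable_summable, rule abs_summable_on_bound[OF c]) (simp add: F_def norm_mult)
    moreover have "phi k (x - grid N i) * phi (int l) (grid N i) = phi k x * phi (int l - k) (grid N i)" for k
      using phi_add_arg[of k x "- grid N i"] by (simp add: phi_minus_arg mult.assoc phi_mult)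
    then have "fourier_sum c (x - grid N i) * phi (int l) (grid N i) = (\<Sum>\<^sub>\<infinity>k. F i k)"
      unfolding fourier_sum_def F_def infsum_cmult_left'[symmetric]
      by (intro infsum_cong) (simp add: mult.assoc)
    ultimately show ?thesis
      by simp
  qed
  then have "((\<lambda>k. \<Sum>i<N. F i k) has_sum (\<Sum>i<N. fourier_sum c (x - grid N i) * phi (int l) (grid N i))) UNIV"
    by (intro has_sum_sum) auto
  moreover have "(\<Sum>i<N. F i k) = of_nat N * (class_coeffs N l c k * phi k x)" for k
    using dvd_diff_commute[of "int N" "int l" k]
    by (simp add: F_def sum_distrib_left[symmetric] sum_phi_grid[OF N] class_coeffs_def)
  ultimately have sum: "((\<lambda>k. of_nat N * (class_coeffs N l c k * phi k x)) has_sum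
      (\<Sum>i<N. fourier_sum c (x - grid N i) * phi (int l) (grid N i))) UNIV"
    by simp
  have "(\<lambda>k. class_coeffs N l c k * phi k x) summable_on UNIV"
    by (rule abs_summable_summable, rule abs_summable_on_bound[OF class_coeffs_abs_summable[OF c, of N l]])
       (simp add: norm_mult)
  then have "((\<lambda>k. of_nat N * (class_coeffs N l c k * phi k x)) has_sum of_nat N * fourier_sum (class_coeffs N l c) x) UNIV"
    unfolding fourier_sum_def by (intro has_sum_cmult_right has_sum_infsum)
  with sum show ?thesis
    by (rule has_sum_unique)
qed

lemma invertible_mat_mult_vec_eq_0:
  fixes A :: "'a::comm_ring_1 mat"
  assumes "invertible_mat A" "A \<in> carrier_mat n n" "v \<in> carrier_vec n" "A *\<^sub>v v = 0\<^sub>v n"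
  shows "v = 0\<^sub>v n"
proof -
  obtain B where AB: "A * B = 1\<^sub>m n" and BA: "B * A = 1\<^sub>m (dim_row B)"
    using assms(1,2) unfolding invertible_mat_def inverts_mat_def by auto
  have B: "B \<in> carrier_mat n n"
    using arg_cong[OF AB, of dim_col] arg_cong[OF BA, of dim_col] assms(2) by auto
  have "v = (B * A) *\<^sub>v v"
    using assms(3) B BA by simp
  also have "\<dots> = B *\<^sub>v 0\<^sub>v n"
    using B assms(2-4) by simp
  also have "\<dots> = 0\<^sub>v n"
    using B by (intro eq_vecI) (auto simp: scalar_prod_def)
  finally show ?thesis .
qed

section \<open>The kernel and its eigenfunctions\<close>

lemma Gcoef_eq_integral:
  "of_real (2 * pi) * Gcoef g M (-k) = integral {-pi..pi} (\<lambda>t. of_real (g (M * t)) * phi k t)"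
  unfolding Gcoef_def phi_def by simp

lemma Gcoef_minus:
  assumes "\<forall>t. g (- t) = g t"
  shows "Gcoef g M (-k) = Gcoef g M k"
proof -
  have "integral {-pi..pi} (\<lambda>t. of_real (g (M * t)) * phi k t) =
        integral {-pi..pi} (\<lambda>t. of_real (g (M * t)) * phi (-k) t)"
    using Henstock_Kurzweil_Integration.integral_reflect_real[of pi "-pi" "\<lambda>t. of_real (g (M * t)) * phi k t"]
    by (simp add: assms phi_minus_arg)
  then have "of_real (2 * pi) * Gcoef g M (-k) = of_real (2 * pi) * Gcoef g M (- (-k))"
    by (simp only: Gcoef_eq_integral)
  then show ?thesis
    by simp
qed

lemma tmod_in_interval: "tmod y \<in> {-pi..pi}"
proof -
  define q where "q = (y + pi) / (2 * pi)"
  have "tmod y = 2 * pi * (q - of_int \<lfloor>q\<rfloor>) - pi"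
    unfolding tmod_def q_def by (simp add: field_simps)
  moreover have "0 \<le> q - of_int \<lfloor>q\<rfloor>" "q - of_int \<lfloor>q\<rfloor> \<le> 1"
    by linarith+
  ultimately show ?thesis
    by (auto simp: mult_le_cancel_left1)
qed

lemma tmod_eq: "tmod y = y + 2 * pi * of_int (- \<lfloor>(y + pi) / (2 * pi)\<rfloor>)"
  unfolding tmod_def by (simp add: algebra_simps)

locale fourier_kernel =
  fixes g :: "real \<Rightarrow> real" and M :: real
  assumes g_even: "\<forall>t. g (- t) = g t"
    and M_pos: "M > 0"
    and g_cont: "continuous_on {-M * pi..M * pi} g"
    and G_nonneg: "\<forall>k. Gcoef g M k \<ge> 0"
    and G_summable: "Gcoef g M summable_on UNIV"
begin

lemma G_abs_summable: "(\<lambda>k. norm (Gcoef g M k)) summable_on UNIV"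
  using G_summable summable_on_iff_abs_summable_on_complex by blast

lemma Gcoef_eq_norm: "Gcoef g M k = of_real (norm (Gcoef g M k))"
  using G_nonneg by (simp add: less_eq_complex_def complex_eq_iff cmod_def)

lemma Re_Gcoef: "Re (Gcoef g M k) = norm (Gcoef g M k)"
  by (subst Gcoef_eq_norm) simp

lemma continuous_on_g_scaled: "continuous_on {-pi..pi} (\<lambda>t. g (M * t))"
  by (rule continuous_on_compose2[OF g_cont]) (use M_pos in \<open>auto intro!: continuous_intros\<close>)

lemma g_eq_fourier_sum:
  assumes t: "t \<in> {-pi..pi}"
  shows "of_real (g (M * t)) = fourier_sum (Gcoef g M) t"
proof -
  define h where "h t = of_real (g (M * t)) - fourier_sum (Gcoef g M) t" for t
  have "h t = 0"
  proof (rule fourier_coeffs_zero_imp_zero[OF _ _ _ t])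
    show cont: "continuous_on {-pi..pi} h"
      unfolding h_def
      by (intro continuous_intros continuous_on_g_scaled continuous_on_fourier_sum G_abs_summable)
    show "h (-s) = h s" for s
      unfolding h_def using g_even fourier_sum_minus[of "Gcoef g M" s] Gcoef_minus[OF g_even] by simp
    show "integral {-pi..pi} (\<lambda>t. h t * phi k t) = 0" for k
      unfolding h_def left_diff_distrib
      by (subst integral_diff)
         (auto intro!: integrable_continuous_interval continuous_intros continuous_on_g_scaled
           continuous_on_fourier_sum G_abs_summable
           simp: integral_fourier_sum_mult_phi[OF G_abs_summable] Gcoef_eq_integral[symmetric])
  qed
  then show ?thesis
    unfolding h_def by simp
qed

lemma kern_eq_fourier_sum: "of_real (kern g M x y) = fourier_sum (Gcoef g M) (x - y)"
proof -
  have "of_real (kern g M x y) = fourier_sum (Gcoef g M) (tmod (x - y))"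
    unfolding kern_def by (rule g_eq_fourier_sum[OF tmod_in_interval])
  also have "\<dots> = fourier_sum (Gcoef g M) (x - y)"
    unfolding tmod_eq by (rule fourier_sum_periodic)
  finally show ?thesis .
qed

lemma infsum_class_coeffs_Gcoef:
  assumes "N > 0"
  shows "(\<Sum>\<^sub>\<infinity>k. class_coeffs N l (Gcoef g M) k) = of_real (G1norm g M N l)"
proof -
  have "class_coeffs N l (Gcoef g M) k = of_real (norm (class_coeffs N l (Gcoef g M) k))" for k
    using Gcoef_eq_norm[of k] by (simp add: class_coeffs_def)
  then show ?thesis
    unfolding G1norm_eq_infsum[OF assms] infsum_of_real[symmetric] by (rule infsum_cong)
qed

lemma sum_kern_phi_grid:
  assumes "N > 0" "even N"
  shows "(\<Sum>i<N. of_real (kern g M x (grid N i)) * phi (int l) (grid N i)) =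
    of_nat N * fourier_sum (class_coeffs N l (Gcoef g M)) x"
  unfolding kern_eq_fourier_sum by (rule sum_fourier_sum_grid[OF G_abs_summable assms])

lemma psi_grid:
  assumes "N > 0" "even N"
  shows "psi g M N l (grid N i) = of_real (sqrt (G1norm g M N l)) * phi (int l) (grid N i)"
proof -
  have "psi g M N l (grid N i) = of_real (1 / sqrt (G1norm g M N l)) * (of_real (G1norm g M N l) * phi (int l) (grid N i))"
    unfolding psi_eq_fourier_sum[OF assms(1)] fourier_sum_class_coeffs_grid[OF assms]
      infsum_class_coeffs_Gcoef[OF assms(1)] ..
  also have "\<dots> = of_real (G1norm g M N l / sqrt (G1norm g M N l)) * phi (int l) (grid N i)"
    by simp
  finally show ?thesis
    using real_div_sqrt[OF G1norm_nonneg] by simp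
qed

lemma TKN_psi:
  assumes "N > 0" "even N"
  shows "TKN g M N (psi g M N l) x = of_real (G1norm g M N l) * psi g M N l x"
proof -
  have "TKN g M N (psi g M N l) x = of_real (1 / real N) *
      (of_real (sqrt (G1norm g M N l)) * (\<Sum>i<N. of_real (kern g M x (grid N i)) * phi (int l) (grid N i)))"
    unfolding TKN_def psi_grid[OF assms] by (simp add: sum_distrib_left ac_simps)
  also have "\<dots> = of_real (sqrt (G1norm g M N l)) * fourier_sum (class_coeffs N l (Gcoef g M)) x"
    unfolding sum_kern_phi_grid[OF assms] using assms(1) by simp
  also have "\<dots> = of_real (G1norm g M N l / sqrt (G1norm g M N l)) * fourier_sum (class_coeffs N l (Gcoef g M)) x"
    using real_div_sqrt[OF G1norm_nonneg] by simp
  also have "\<dots> = of_real (G1norm g M N l) * psi g M N l x"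
    unfolding psi_eq_fourier_sum[OF assms(1)] by simp
  finally show ?thesis .
qed

lemma G1norm_pos:
  assumes N: "N > 0" "even N" and inv: "invertible_mat (kernel_matrix g M N)"
  shows "G1norm g M N l > 0"
proof (rule ccontr)
  assume "\<not> G1norm g M N l > 0"
  with G1norm_nonneg have G1: "G1norm g M N l = 0"
    by (simp add: order_less_le)
  define v where "v = vec N (\<lambda>k. Re (phi (int l) (grid N k)))"
  have Kv: "kernel_matrix g M N *\<^sub>v v = 0\<^sub>v N"
  proof (rule eq_vecI)
    fix i
    assume "i < dim_vec (0\<^sub>v N :: real vec)"
    then have i: "i < N"
      by simp
    have "(kernel_matrix g M N *\<^sub>v v) $ i = Re (\<Sum>k<N. of_real (kern g M (grid N i) (grid N k)) * phi (int l) (grid N k))"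
      using i unfolding kernel_matrix_def v_def by (simp add: scalar_prod_def lessThan_atLeast0 Re_sum)
    also have "\<dots> = 0"
      unfolding sum_kern_phi_grid[OF N] fourier_sum_class_coeffs_grid[OF N]
        infsum_class_coeffs_Gcoef[OF N(1)] G1 by simp
    finally show "(kernel_matrix g M N *\<^sub>v v) $ i = 0\<^sub>v N $ i"
      using i by simp
  qed (simp add: kernel_matrix_def)
  have "v = 0\<^sub>v N"
    by (rule invertible_mat_mult_vec_eq_0[OF inv _ _ Kv]) (auto simp: kernel_matrix_def v_def)
  moreover have "v $ 0 = cos (real l * pi)"
    using N by (simp add: v_def grid_def phi_def Re_exp)
  ultimately show False
    using N cos_pi_eq_zero[of l] by (auto simp: cos_integer_2pi)
qed

lemma rkhs_norm_psi:
  assumes "N > 0" "G1norm g M N l > 0"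
  shows "rkhs_norm g M (psi g M N l) = 1"
proof -
  define c where "c = class_coeffs N l (Gcoef g M)"
  have c: "(\<lambda>k. norm (c k)) summable_on UNIV"
    unfolding c_def by (rule class_coeffs_abs_summable[OF G_abs_summable])
  have "(cmod (L2inner (psi g M N l) (phi k)))\<^sup>2 / Re (Gcoef g M k) = norm (c k) / G1norm g M N l" for k
  proof -
    have "L2inner (psi g M N l) (phi k) = of_real (1 / sqrt (G1norm g M N l)) * c k"
      unfolding psi_eq_fourier_sum[OF assms(1)] c_def[symmetric] L2inner_scale_left L2inner_fourier_sum_phi[OF c] ..
    then have "(cmod (L2inner (psi g M N l) (phi k)))\<^sup>2 = (norm (c k))\<^sup>2 / G1norm g M N l"
      using assms(2) by (simp add: norm_divide power_divide real_sqrt_pow2)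
    then have "(cmod (L2inner (psi g M N l) (phi k)))\<^sup>2 / Re (Gcoef g M k) =
        (norm (c k))\<^sup>2 / Re (Gcoef g M k) / G1norm g M N l"
      by (simp add: divide_divide_eq_left mult.commute)
    also have "(norm (c k))\<^sup>2 / Re (Gcoef g M k) = norm (c k)"
      by (cases "Gcoef g M k = 0") (simp_all add: c_def class_coeffs_def Re_Gcoef power2_eq_square)
    finally show ?thesis .
  qed
  then have "(\<Sum>\<^sub>\<infinity>k. (cmod (L2inner (psi g M N l) (phi k)))\<^sup>2 / Re (Gcoef g M k)) =
      (\<Sum>\<^sub>\<infinity>k. norm (c k)) / G1norm g M N l"
    unfolding divide_inverse by (simp add: infsum_cmult_left')
  also have "\<dots> = 1"
    using assms(2) by (simp add: c_def G1norm_eq_infsum[OF assms(1), symmetric])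
  finally show ?thesis
    unfolding rkhs_norm_def by simp
qed

lemma L2norm_psi:
  assumes "N > 0"
  shows "L2norm (psi g M N l) = G2norm g M N l / sqrt (G1norm g M N l)"
proof -
  define c where "c = class_coeffs N l (Gcoef g M)"
  have c: "(\<lambda>k. norm (c k)) summable_on UNIV"
    unfolding c_def by (rule class_coeffs_abs_summable[OF G_abs_summable])
  have "c k * cnj (c k) = of_real ((norm (c k))\<^sup>2)" for k
    by (rule complex_norm_square[symmetric])
  then have "(\<Sum>\<^sub>\<infinity>k. c k * cnj (c k)) = of_real (\<Sum>\<^sub>\<infinity>k. (norm (c k))\<^sup>2)"
    by (simp only: infsum_of_real)
  then have "L2inner (psi g M N l) (psi g M N l) =
      of_real (1 / sqrt (G1norm g M N l)) * (cnj (of_real (1 / sqrt (G1norm g M N l))) * of_real (\<Sum>\<^sub>\<infinity>k. (norm (c k))\<^sup>2))"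
    unfolding psi_eq_fourier_sum[OF assms(1)] c_def[symmetric] L2inner_scale_left L2inner_scale_right
      L2inner_fourier_sum[OF c c] by simp
  then have "Re (L2inner (psi g M N l) (psi g M N l)) = (G2norm g M N l / sqrt (G1norm g M N l))\<^sup>2"
    unfolding G2norm_eq_infsum[OF assms(1)] c_def[symmetric]
    by (simp add: power_divide infsum_nonneg G1norm_nonneg power2_eq_square)
  moreover have "G2norm g M N l / sqrt (G1norm g M N l) \<ge> 0"
    unfolding G2norm_def using G1norm_nonneg[of g M N l] by (simp add: infsum_nonneg)
  ultimately show ?thesis
    unfolding L2norm_eq_sqrt_L2inner by (metis real_sqrt_abs abs_of_nonneg)
qed

lemma L2inner_psi_eq_0:
  assumes "k < N" "l < N" "k \<noteq> l"
  shows "L2inner (psi g M N l) (psi g M N k) = 0"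
proof -
  have N: "N > 0"
    using assms by simp
  have c: "(\<lambda>j. norm (class_coeffs N i (Gcoef g M) j)) summable_on UNIV" for i
    by (rule class_coeffs_abs_summable[OF G_abs_summable])
  show ?thesis
    unfolding psi_eq_fourier_sum[OF N] L2inner_scale_left L2inner_scale_right L2inner_fourier_sum[OF c c]
    by (simp add: class_coeffs_orthogonal[OF assms])
qed

end

theorem lemma8:
  fixes g :: "real \<Rightarrow> real" and M :: real and N :: nat
  assumes g_even: "\<forall>t. g (- t) = g t"
    and M_pos: "M > 0"
    and g_cont: "continuous_on {-M * pi..M * pi} g"
    and K_pd: "pos_def_kernel (kern g M)"
    and G_nonneg: "\<forall>k. Gcoef g M k \<ge> 0"
    and G_summable: "Gcoef g M summable_on UNIV"
    and N_even: "even N"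
    and K_inv: "invertible_mat (kernel_matrix g M N)"
  shows "\<forall>l<N.
           (\<forall>x\<in>{-pi..<pi}. TKN g M N (psi g M N l) x = of_real (G1norm g M N l) * psi g M N l x)
         \<and> rkhs_norm g M (psi g M N l) = 1
         \<and> L2norm (psi g M N l) = G2norm g M N l / sqrt (G1norm g M N l)
         \<and> (\<forall>k<N. k \<noteq> l \<longrightarrow> L2inner (psi g M N l) (psi g M N k) = 0)"
proof -
  interpret fourier_kernel g M
    using g_even M_pos g_cont G_nonneg G_summable by unfold_locales
  have "G1norm g M N l > 0" if "l < N" for l
    using that N_even K_inv by (intro G1norm_pos) auto
  then show ?thesis
    using TKN_psi[OF _ N_even] rkhs_norm_psi L2norm_psi L2inner_psi_eq_0 by (simp add: gr0I)
qed

end
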